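(* Let $G$ be a locally compact group with left Haar measure, let $\pi$ be an irreducible strongly continuous unitary representation of $G$ on a separable Hilbert space $\mathcal{S}$ admitting at least one window, let $K$ be its Duflo–Moore operator, $\mathcal{W}$ the window space and $\mathcal{W}\otimes\mathcal{S}$ the window-signal space (as in the context). Define $V$ on the linear span $[(\mathcal{W}\cap\mathcal{S})\otimes\mathcal{S}]_0$ of the simple vectors $f\otimes s$ with $f\in\mathcal{W}\cap\mathcal{S}$, $s\in\mathcal{S}$, by $V\big(\sum_j f_j\otimes s_j\big)=\sum_j V_{f_j}[s_j]$. Then $V$ is well defined and isometric on this dense subspace, and its unique continuous extension $V:\mathcal{W}\otimes\mathcal{S}\to L^2(G)$ (the wavelet-Plancherel transform) is an isometric isomorphism between $\mathcal{W}\otimes\mathcal{S}$ and $V(\mathcal{W}\otimes\mathcal{S})\subset L^2(G)$.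
   Context: A vector $f\in\mathcal{S}$ is a window if $g\mapsto\langle f,\pi(g)f\rangle$ lies in $L^2(G)$ (left Haar measure). For a window $f$ the wavelet transform is $V_f[s](g)=\langle s,\pi(g)f\rangle$. The Duflo–Moore operator $K$ is the (up to scalar unique) densely defined positive self-adjoint operator on $\mathcal{S}$ with densely defined inverse whose domain $\mathcal{D}(K)$ is the set of windows and such that $\langle V_{f_1}[s_1],V_{f_2}[s_2]\rangle_{L^2(G)}=\langle s_1,s_2\rangle_{\mathcal{S}}\langle Kf_2,Kf_1\rangle_{\mathcal{S}}$ for all windows $f_1,f_2$ and $s_1,s_2\in\mathcal{S}$. The window space $\mathcal{W}$ is the Hilbert space completion of $\mathcal{D}(K)$ with respect to $\langle f_1,f_2\rangle_{\mathcal{W}}=\langle Kf_1,Kf_2\rangle_{\mathcal{S}}$; thus $\mathcal{W}\cap\mathcal{S}=\mathcal{D}(K)$. The tensor product $\mathcal{W}\otimes\mathcal{S}$ is built from orthonormal bases $\{\phi_n\}$ of $\mathcal{W}$ and $\{\eta_m\}$ of $\mathcal{S}$ as the Hilbert space with orthonormal basis $\{\phi_n\otimes\eta_m\}$, and for $f=\sum c_n\phi_n$, $s=\sum d_m\eta_m$ one sets $f\otimes s=\sum_{n,m}\overline{c_n}d_m\,\phi_n\otimes\eta_m$ (conjugate-linear in the first factor), so that $\langle f_1\otimes s_1,f_2\otimes s_2\rangle=\overline{\langle f_1,f_2\rangle_{\mathcal{W}}}\langle s_1,s_2\rangle_{\mathcal{S}}$. *)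

theory Defs
  imports "HOL-Analysis.Analysis"
begin

text \<open>Inner products are linear in the first and conjugate-linear in the second argument.\<close>

definition complex_inner_space ::
  "(complex \<Rightarrow> 'a::ab_group_add \<Rightarrow> 'a) \<Rightarrow> ('a \<Rightarrow> 'a \<Rightarrow> complex) \<Rightarrow> bool" where
  "complex_inner_space sc ip \<longleftrightarrow>
     vector_space sc \<and>
     (\<forall>x y z. ip (x + y) z = ip x z + ip y z) \<and>
     (\<forall>c x y. ip (sc c x) y = c * ip x y) \<and>
     (\<forall>x y. ip y x = cnj (ip x y)) \<and>
     (\<forall>x. 0 \<le> Re (ip x x)) \<and>
     (\<forall>x. ip x x = 0 \<longrightarrow> x = 0)"

definition hnorm :: "('a \<Rightarrow> 'a \<Rightarrow> complex) \<Rightarrow> 'a \<Rightarrow> real" where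
  "hnorm ip x = sqrt (Re (ip x x))"

definition hcomplete :: "('a::ab_group_add \<Rightarrow> 'a \<Rightarrow> complex) \<Rightarrow> bool" where
  "hcomplete ip \<longleftrightarrow>
     (\<forall>X :: nat \<Rightarrow> 'a.
        (\<forall>e>0. \<exists>N. \<forall>m\<ge>N. \<forall>n\<ge>N. hnorm ip (X m - X n) < e) \<longrightarrow>
        (\<exists>L. (\<lambda>n. hnorm ip (X n - L)) \<longlonglongrightarrow> 0))"

definition hilbert_space ::
  "(complex \<Rightarrow> 'a::ab_group_add \<Rightarrow> 'a) \<Rightarrow> ('a \<Rightarrow> 'a \<Rightarrow> complex) \<Rightarrow> bool" where
  "hilbert_space sc ip \<longleftrightarrow> complex_inner_space sc ip \<and> hcomplete ip"

definition hdense :: "('a::ab_group_add \<Rightarrow> 'a \<Rightarrow> complex) \<Rightarrow> 'a set \<Rightarrow> bool" where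
  "hdense ip A \<longleftrightarrow> (\<forall>x e. e > 0 \<longrightarrow> (\<exists>y\<in>A. hnorm ip (x - y) < e))"

definition hseparable :: "('a::ab_group_add \<Rightarrow> 'a \<Rightarrow> complex) \<Rightarrow> bool" where
  "hseparable ip \<longleftrightarrow> (\<exists>C. countable C \<and> hdense ip C)"

definition hclosed :: "('a::ab_group_add \<Rightarrow> 'a \<Rightarrow> complex) \<Rightarrow> 'a set \<Rightarrow> bool" where
  "hclosed ip A \<longleftrightarrow>
     (\<forall>X x. range X \<subseteq> A \<and> (\<lambda>n. hnorm ip (X n - x)) \<longlonglongrightarrow> 0 \<longrightarrow> x \<in> A)"

definition lin_subspace :: "(complex \<Rightarrow> 'a::ab_group_add \<Rightarrow> 'a) \<Rightarrow> 'a set \<Rightarrow> bool" where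
  "lin_subspace sc A \<longleftrightarrow>
     0 \<in> A \<and> (\<forall>x\<in>A. \<forall>y\<in>A. x + y \<in> A) \<and> (\<forall>c. \<forall>x\<in>A. sc c x \<in> A)"

definition locally_compact_group :: "'g::{topological_group_add, t2_space} itself \<Rightarrow> bool" where
  "locally_compact_group _ \<longleftrightarrow> locally_compact_space (euclidean :: 'g topology)"

text \<open>The group operation is written additively.\<close>

definition left_haar :: "'g::{topological_group_add, t2_space} measure \<Rightarrow> bool" where
  "left_haar \<mu> \<longleftrightarrow>
     sets \<mu> = sets borel \<and>
     (\<forall>g A. A \<in> sets borel \<longrightarrow> emeasure \<mu> ((\<lambda>x. g + x) ` A) = emeasure \<mu> A) \<and>
     (\<forall>K. compact K \<longrightarrow> emeasure \<mu> K < \<infinity>) \<and>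
     (\<forall>U. open U \<and> U \<noteq> {} \<longrightarrow> emeasure \<mu> U > 0) \<and>
     (\<forall>A \<in> sets borel. emeasure \<mu> A = (INF U \<in> {U. open U \<and> A \<subseteq> U}. emeasure \<mu> U)) \<and>
     (\<forall>U. open U \<longrightarrow> emeasure \<mu> U = (SUP K \<in> {K. compact K \<and> K \<subseteq> U}. emeasure \<mu> K))"

text \<open>Square integrable functions (representatives of elements of L^2(G)).\<close>

definition sq_int :: "'g measure \<Rightarrow> ('g \<Rightarrow> complex) \<Rightarrow> bool" where
  "sq_int \<mu> F \<longleftrightarrow> F \<in> borel_measurable \<mu> \<and> integrable \<mu> (\<lambda>g. (cmod (F g))\<^sup>2)"

definition L2_inner :: "'g measure \<Rightarrow> ('g \<Rightarrow> complex) \<Rightarrow> ('g \<Rightarrow> complex) \<Rightarrow> complex" where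
  "L2_inner \<mu> F H = (\<integral>g. F g * cnj (H g) \<partial>\<mu>)"

definition L2_normsq :: "'g measure \<Rightarrow> ('g \<Rightarrow> complex) \<Rightarrow> real" where
  "L2_normsq \<mu> F = (\<integral>g. (cmod (F g))\<^sup>2 \<partial>\<mu>)"

definition strongly_cont_unitary_rep ::
  "(complex \<Rightarrow> 's::ab_group_add \<Rightarrow> 's) \<Rightarrow> ('s \<Rightarrow> 's \<Rightarrow> complex) \<Rightarrow>
   ('g::{topological_group_add, t2_space} \<Rightarrow> 's \<Rightarrow> 's) \<Rightarrow> bool" where
  "strongly_cont_unitary_rep sc ip \<pi> \<longleftrightarrow>
     (\<forall>g x y. \<pi> g (x + y) = \<pi> g x + \<pi> g y) \<and>
     (\<forall>g c x. \<pi> g (sc c x) = sc c (\<pi> g x)) \<and>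
     (\<forall>g x y. ip (\<pi> g x) (\<pi> g y) = ip x y) \<and>
     (\<forall>g. surj (\<pi> g)) \<and>
     \<pi> 0 = id \<and>
     (\<forall>g h. \<pi> (g + h) = \<pi> g \<circ> \<pi> h) \<and>
     (\<forall>s g0. ((\<lambda>g. hnorm ip (\<pi> g s - \<pi> g0 s)) \<longlongrightarrow> 0) (at g0))"

definition irreducible_rep ::
  "(complex \<Rightarrow> 's::ab_group_add \<Rightarrow> 's) \<Rightarrow> ('s \<Rightarrow> 's \<Rightarrow> complex) \<Rightarrow> ('g \<Rightarrow> 's \<Rightarrow> 's) \<Rightarrow> bool" where
  "irreducible_rep sc ip \<pi> \<longleftrightarrow>
     (\<exists>x::'s. x \<noteq> 0) \<and>
     (\<forall>A. lin_subspace sc A \<and> hclosed ip A \<and> (\<forall>g. \<pi> g ` A \<subseteq> A) \<longrightarrow> A = {0} \<or> A = UNIV)"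

definition wavelet :: "('s \<Rightarrow> 's \<Rightarrow> complex) \<Rightarrow> ('g \<Rightarrow> 's \<Rightarrow> 's) \<Rightarrow> 's \<Rightarrow> 's \<Rightarrow> 'g \<Rightarrow> complex" where
  "wavelet ip \<pi> f s = (\<lambda>g. ip s (\<pi> g f))"

definition is_window :: "'g measure \<Rightarrow> ('s \<Rightarrow> 's \<Rightarrow> complex) \<Rightarrow> ('g \<Rightarrow> 's \<Rightarrow> 's) \<Rightarrow> 's \<Rightarrow> bool" where
  "is_window \<mu> ip \<pi> f \<longleftrightarrow> sq_int \<mu> (\<lambda>g. ip f (\<pi> g f))"

text \<open>Values of K outside D are irrelevant.\<close>

definition duflo_moore ::
  "'g measure \<Rightarrow> (complex \<Rightarrow> 's::ab_group_add \<Rightarrow> 's) \<Rightarrow> ('s \<Rightarrow> 's \<Rightarrow> complex) \<Rightarrow>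
   ('g \<Rightarrow> 's \<Rightarrow> 's) \<Rightarrow> 's set \<Rightarrow> ('s \<Rightarrow> 's) \<Rightarrow> bool" where
  "duflo_moore \<mu> sc ip \<pi> D K \<longleftrightarrow>
     D = {f. is_window \<mu> ip \<pi> f} \<and>
     lin_subspace sc D \<and> hdense ip D \<and>
     (\<forall>x\<in>D. \<forall>y\<in>D. K (x + y) = K x + K y) \<and>
     (\<forall>c. \<forall>x\<in>D. K (sc c x) = sc c (K x)) \<and>
     (\<forall>x\<in>D. \<forall>y\<in>D. ip (K x) y = ip x (K y)) \<and>
     (\<forall>y z. (\<forall>x\<in>D. ip (K x) y = ip x z) \<longrightarrow> y \<in> D \<and> K y = z) \<and>
     (\<forall>x\<in>D. 0 \<le> Re (ip (K x) x)) \<and>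
     inj_on K D \<and> hdense ip (K ` D) \<and>
     (\<forall>f1\<in>D. \<forall>f2\<in>D. \<forall>s1 s2.
        L2_inner \<mu> (wavelet ip \<pi> f1 s1) (wavelet ip \<pi> f2 s2) = ip s1 s2 * ip (K f2) (K f1))"

text \<open>The window space: a Hilbert space W together with a linear map j from D into W,
  isometric for the inner product (Kf1, Kf2), with dense range, i.e. the Hilbert space
  completion of D; j identifies W \<inter> S with D.\<close>

definition window_space ::
  "(complex \<Rightarrow> 's::ab_group_add \<Rightarrow> 's) \<Rightarrow> ('s \<Rightarrow> 's \<Rightarrow> complex) \<Rightarrow> 's set \<Rightarrow> ('s \<Rightarrow> 's) \<Rightarrow>
   (complex \<Rightarrow> 'w::ab_group_add \<Rightarrow> 'w) \<Rightarrow> ('w \<Rightarrow> 'w \<Rightarrow> complex) \<Rightarrow> ('s \<Rightarrow> 'w) \<Rightarrow> bool" where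
  "window_space sc ip D K scW ipW j \<longleftrightarrow>
     hilbert_space scW ipW \<and>
     (\<forall>x\<in>D. \<forall>y\<in>D. j (x + y) = j x + j y) \<and>
     (\<forall>c. \<forall>x\<in>D. j (sc c x) = scW c (j x)) \<and>
     (\<forall>f1\<in>D. \<forall>f2\<in>D. ipW (j f1) (j f2) = ip (K f1) (K f2)) \<and>
     hdense ipW (j ` D)"

text \<open>The Hilbert tensor product W \<otimes> S, conjugate-linear in the first factor:
  a Hilbert space T with a map tens such that
  <f1 \<otimes> s1, f2 \<otimes> s2> = conj <f1,f2>_W <s1,s2>_S and the simple tensors span a dense subspace.\<close>

definition tensor_product ::
  "(complex \<Rightarrow> 'w::ab_group_add \<Rightarrow> 'w) \<Rightarrow> ('w \<Rightarrow> 'w \<Rightarrow> complex) \<Rightarrow>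
   (complex \<Rightarrow> 's::ab_group_add \<Rightarrow> 's) \<Rightarrow> ('s \<Rightarrow> 's \<Rightarrow> complex) \<Rightarrow>
   (complex \<Rightarrow> 't::ab_group_add \<Rightarrow> 't) \<Rightarrow> ('t \<Rightarrow> 't \<Rightarrow> complex) \<Rightarrow> ('w \<Rightarrow> 's \<Rightarrow> 't) \<Rightarrow> bool" where
  "tensor_product scW ipW sc ip scT ipT tens \<longleftrightarrow>
     hilbert_space scT ipT \<and>
     (\<forall>a b s. tens (a + b) s = tens a s + tens b s) \<and>
     (\<forall>c a s. tens (scW c a) s = scT (cnj c) (tens a s)) \<and>
     (\<forall>a s t. tens a (s + t) = tens a s + tens a t) \<and>
     (\<forall>c a s. tens a (sc c s) = scT c (tens a s)) \<and>
     (\<forall>a b s t. ipT (tens a s) (tens b t) = cnj (ipW a b) * ip s t) \<and>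
     (\<forall>x e. e > 0 \<longrightarrow>
        (\<exists>n (a :: nat \<Rightarrow> 'w) (s :: nat \<Rightarrow> 's). hnorm ipT (x - (\<Sum>i<n. tens (a i) (s i))) < e))"

end

theory Submission
  imports Defs
begin

text \<open>By the orthogonality relations,
  \<open>\<langle>V\<^bsub>f\<^sub>1\<^esub>[s\<^sub>1], V\<^bsub>f\<^sub>2\<^esub>[s\<^sub>2]\<rangle> = \<langle>s\<^sub>1, s\<^sub>2\<rangle> \<langle>K f\<^sub>2, K f\<^sub>1\<rangle>
   = \<langle>f\<^sub>1 \<otimes> s\<^sub>1, f\<^sub>2 \<otimes> s\<^sub>2\<rangle>\<close>, so \<open>\<Sum> f\<^sub>i \<otimes> s\<^sub>i \<mapsto> \<Sum> V\<^bsub>f\<^sub>i\<^esub>[s\<^sub>i]\<close> preserves inner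
  products of representations. Applied to the difference of two representations of the same
  tensor this gives well-definedness almost everywhere, and isometry on the span; the span is dense
  because \<open>\<W> \<inter> \<S>\<close> is dense in \<open>\<W>\<close>.

  The continuous extension is built by hand in \<open>L\<^sup>2\<close>: approximate \<open>x\<close> by elements \<open>x\<^sub>k\<close> of the
  span with \<open>\<parallel>x - x\<^sub>k\<parallel> < 4\<^sup>-\<^sup>k\<close>. The transforms of consecutive approximants differ by
  geometrically small \<open>L\<^sup>2\<close> norms, hence converge almost everywhere, and Fatou's lemma bounds the
  \<open>L\<^sup>2\<close> distance of the limit to the transform of any element of the span by the distance in
  \<open>\<W> \<otimes> \<S>\<close>.\<close>

section \<open>Complex inner product spaces\<close>

locale cinner_space =
  fixes sc :: "complex \<Rightarrow> 'a::ab_group_add \<Rightarrow> 'a" and ip :: "'a \<Rightarrow> 'a \<Rightarrow> complex"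
  assumes complex_inner_space: "complex_inner_space sc ip"
begin

sublocale vector_space sc
  using complex_inner_space unfolding complex_inner_space_def by (rule conjunct1)

lemma ip_add_left: "ip (x + y) z = ip x z + ip y z"
  and ip_scale_left: "ip (sc c x) y = c * ip x y"
  and ip_cnj_commute: "ip y x = cnj (ip x y)"
  and ip_self_Re_nonneg: "0 \<le> Re (ip x x)"
  and ip_self_eq_zero: "ip x x = 0 \<Longrightarrow> x = 0"
  using complex_inner_space unfolding complex_inner_space_def by metis+

lemma ip_diff_left: "ip (x - y) z = ip x z - ip y z"
  using ip_add_left[of "x - y" y z] by (simp add: eq_diff_eq)

lemma ip_zero_left [simp]: "ip 0 y = 0"
  using ip_diff_left[of 0 0 y] by simp

lemma ip_add_right: "ip x (y + z) = ip x y + ip x z"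
  by (metis ip_cnj_commute ip_add_left complex_cnj_add)

lemma ip_diff_right: "ip x (y - z) = ip x y - ip x z"
  by (metis ip_cnj_commute ip_diff_left complex_cnj_diff)

lemma ip_zero_right [simp]: "ip x 0 = 0"
  using ip_diff_right[of x 0 0] by simp

lemma ip_scale_right: "ip x (sc c y) = cnj c * ip x y"
  by (metis ip_cnj_commute ip_scale_left complex_cnj_mult)

lemma ip_sum_left: "ip (sum f A) y = (\<Sum>i\<in>A. ip (f i) y)"
  by (induction A rule: infinite_finite_induct) (auto simp: ip_add_left)

lemma ip_sum_right: "ip x (sum f A) = (\<Sum>i\<in>A. ip x (f i))"
  by (induction A rule: infinite_finite_induct) (auto simp: ip_add_right)

lemma ip_self_real: "ip x x = complex_of_real (Re (ip x x))"
  using arg_cong[OF ip_cnj_commute[of x x], of Im] by (simp add: complex_eq_iff)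

lemma hnorm_nonneg: "0 \<le> hnorm ip x"
  unfolding hnorm_def using ip_self_Re_nonneg by simp

lemma hnorm_zero [simp]: "hnorm ip 0 = 0"
  unfolding hnorm_def by simp

lemma power2_hnorm: "(hnorm ip x)\<^sup>2 = Re (ip x x)"
  unfolding hnorm_def using ip_self_Re_nonneg[of x] by simp

lemma hnorm_minus_commute: "hnorm ip (x - y) = hnorm ip (y - x)"
proof -
  have "ip (y - x) (y - x) = ip (x - y) (x - y)"
    by (simp add: ip_diff_left ip_diff_right)
  then show ?thesis
    unfolding hnorm_def by simp
qed

lemma hnorm_scale: "hnorm ip (sc c x) = cmod c * hnorm ip x"
proof -
  have "ip (sc c x) (sc c x) = (c * cnj c) * ip x x"
    by (simp add: ip_scale_left ip_scale_right)
  also have "\<dots> = complex_of_real ((cmod c)\<^sup>2) * complex_of_real (Re (ip x x))"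
    by (subst ip_self_real) (metis complex_norm_square)
  finally have "ip (sc c x) (sc c x) = complex_of_real ((cmod c)\<^sup>2 * Re (ip x x))"
    by simp
  then show ?thesis
    unfolding hnorm_def by (simp add: real_sqrt_mult)
qed

lemma cauchy_schwarz: "cmod (ip x y) \<le> hnorm ip x * hnorm ip y"
proof (cases "y = 0")
  case False
  define c where "c = Re (ip y y)"
  define b where "b = ip x y"
  define t where "t = b / complex_of_real c"
  have "c > 0"
    using False ip_self_eq_zero[of y] ip_self_real[of y] ip_self_Re_nonneg[of y]
    unfolding c_def by (metis less_eq_real_def of_real_0)
  \<comment> \<open>expand \<open>0 \<le> \<langle>x - t y, x - t y\<rangle>\<close> for the optimal \<open>t = \<langle>x, y\<rangle> / \<langle>y, y\<rangle>\<close>\<close>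
  have "ip (x - sc t y) (x - sc t y) = ip x x - cnj t * b - t * cnj b + t * cnj t * c"
    unfolding b_def c_def
    by (simp add: ip_diff_left ip_diff_right ip_scale_left ip_scale_right algebra_simps
        ip_cnj_commute[of x y] flip: ip_self_real)
  also have "\<dots> = ip x x - complex_of_real ((cmod b)\<^sup>2 / c)"
    using \<open>c > 0\<close> unfolding t_def
    by (simp add: field_simps power2_eq_square flip: complex_norm_square)
  finally have "0 \<le> Re (ip x x) - (cmod b)\<^sup>2 / c"
    using ip_self_Re_nonneg[of "x - sc t y"] by simp
  then have "(cmod b)\<^sup>2 \<le> Re (ip x x) * c"
    using \<open>c > 0\<close> by (simp add: field_simps)
  then have "(cmod b)\<^sup>2 \<le> (hnorm ip x * hnorm ip y)\<^sup>2"
    unfolding c_def by (simp add: power_mult_distrib power2_hnorm)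
  then show ?thesis
    unfolding b_def using hnorm_nonneg by (meson mult_nonneg_nonneg power2_le_imp_le)
qed (simp add: hnorm_nonneg)

lemma hnorm_triangle: "hnorm ip (x + y) \<le> hnorm ip x + hnorm ip y"
proof -
  have "(hnorm ip (x + y))\<^sup>2 = Re (ip x x) + Re (ip y y) + 2 * Re (ip x y)"
    by (simp add: power2_hnorm ip_add_left ip_add_right ip_cnj_commute[of x y])
  also have "\<dots> \<le> (hnorm ip x + hnorm ip y)\<^sup>2"
    using cauchy_schwarz[of x y] complex_Re_le_cmod[of "ip x y"]
    by (simp add: power2_sum power2_hnorm)
  finally show ?thesis
    using hnorm_nonneg by (meson add_nonneg_nonneg power2_le_imp_le)
qed

lemma hnorm_triangle_diff: "hnorm ip (x - z) \<le> hnorm ip (x - y) + hnorm ip (y - z)"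
  using hnorm_triangle[of "x - y" "y - z"] by simp

lemma hnorm_diff_diff_le:
  "\<bar>hnorm ip (x - y) - hnorm ip (x' - y')\<bar> \<le> hnorm ip (x - x') + hnorm ip (y - y')"
  using hnorm_triangle_diff[of x y x'] hnorm_triangle_diff[of x' y y']
    hnorm_triangle_diff[of x' y' x] hnorm_triangle_diff[of x y' y]
    hnorm_minus_commute[of x x'] hnorm_minus_commute[of y y']
  by linarith

lemma hnorm_sum: "hnorm ip (sum f A) \<le> (\<Sum>i\<in>A. hnorm ip (f i))"
proof (induction A rule: infinite_finite_induct)
  case (insert a A)
  then show ?case
    using hnorm_triangle[of "f a" "sum f A"] by simp
qed simp_all

end

section \<open>Square integrable functions\<close>

definition L2_norm :: "'g measure \<Rightarrow> ('g \<Rightarrow> complex) \<Rightarrow> real" where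
  "L2_norm \<mu> F = sqrt (L2_normsq \<mu> F)"

lemma measurable_cnj [measurable]:
  "F \<in> borel_measurable M \<Longrightarrow> (\<lambda>x. cnj (F x)) \<in> borel_measurable M"
  by (rule measurable_compose[OF _ borel_measurable_continuous_onI]) (auto intro: continuous_intros)

lemma norm_add_power2_le:
  fixes x y :: "'a::real_normed_vector"
  assumes "t > 0"
  shows "(norm (x + y))\<^sup>2 \<le> (1 + t) * (norm x)\<^sup>2 + (1 + 1 / t) * (norm y)\<^sup>2"
proof -
  have "(norm (x + y))\<^sup>2 \<le> (norm x + norm y)\<^sup>2"
    by (simp add: norm_triangle_ineq power_mono)
  also have "\<dots> \<le> (1 + t) * (norm x)\<^sup>2 + (1 + 1 / t) * (norm y)\<^sup>2"
  proof -
    have "2 * norm x * norm y * t \<le> t\<^sup>2 * (norm x)\<^sup>2 + (norm y)\<^sup>2"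
      using sum_squares_bound[of "t * norm x" "norm y"] by (simp add: power_mult_distrib algebra_simps)
    then have "2 * norm x * norm y \<le> t * (norm x)\<^sup>2 + (norm y)\<^sup>2 / t"
      using assms by (simp add: field_simps power2_eq_square)
    then show ?thesis
      by (simp add: power2_sum algebra_simps)
  qed
  finally show ?thesis .
qed

lemma summable_if_weighted_power2_bounded:
  fixes a :: "nat \<Rightarrow> 'a::banach"
  assumes "\<And>k. 4 ^ k * (norm (a k))\<^sup>2 \<le> M"
  shows "summable a"
proof (rule summable_comparison_test)
  have "norm (a k) \<le> sqrt M * (1/2) ^ k" for k
  proof -
    have "(norm (a k))\<^sup>2 \<le> M * (1/4) ^ k"
      using assms[of k] by (simp add: field_simps power_divide)
    then have "norm (a k) \<le> sqrt (M * (1/4) ^ k)"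
      by (rule real_le_rsqrt)
    then show ?thesis
      by (simp add: real_sqrt_mult real_sqrt_power real_sqrt_divide)
  qed
  then show "\<exists>N. \<forall>k\<ge>N. norm (a k) \<le> sqrt M * (1/2) ^ k"
    by blast
  show "summable (\<lambda>k. sqrt M * (1/2::real) ^ k)"
    by (intro summable_mult summable_geometric) simp
qed

context
  fixes \<mu> :: "'g measure"
begin

lemma sq_int_measurable: "sq_int \<mu> F \<Longrightarrow> F \<in> borel_measurable \<mu>"
  unfolding sq_int_def by simp

lemma sq_int_zero [simp]: "sq_int \<mu> (\<lambda>g. 0)"
  unfolding sq_int_def by simp

lemma integrable_mult_cnj:
  assumes "sq_int \<mu> F" "sq_int \<mu> G"
  shows "integrable \<mu> (\<lambda>g. F g * cnj (G g))"
proof (rule Bochner_Integration.integrable_bound)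
  show "integrable \<mu> (\<lambda>g. (cmod (F g))\<^sup>2 + (cmod (G g))\<^sup>2)"
    using assms by (simp add: sq_int_def)
  show "(\<lambda>g. F g * cnj (G g)) \<in> borel_measurable \<mu>"
    using assms[THEN sq_int_measurable] by measurable
  have "cmod (F g) * cmod (G g) \<le> (cmod (F g))\<^sup>2 + (cmod (G g))\<^sup>2" for g
    using sum_squares_bound[of "cmod (F g)" "cmod (G g)"]
      mult_nonneg_nonneg[OF norm_ge_zero norm_ge_zero, of "F g" "G g"] by linarith
  then show "AE g in \<mu>. norm (F g * cnj (G g)) \<le> norm ((cmod (F g))\<^sup>2 + (cmod (G g))\<^sup>2)"
    by (simp add: norm_mult)
qed

lemma sq_int_add:
  assumes "sq_int \<mu> F" "sq_int \<mu> G"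
  shows "sq_int \<mu> (\<lambda>g. F g + G g)"
  unfolding sq_int_def
proof
  show "(\<lambda>g. F g + G g) \<in> borel_measurable \<mu>"
    using assms[THEN sq_int_measurable] by measurable
  show "integrable \<mu> (\<lambda>g. (cmod (F g + G g))\<^sup>2)"
  proof (rule Bochner_Integration.integrable_bound)
    show "integrable \<mu> (\<lambda>g. 2 * (cmod (F g))\<^sup>2 + 2 * (cmod (G g))\<^sup>2)"
      using assms by (simp add: sq_int_def)
    show "(\<lambda>g. (cmod (F g + G g))\<^sup>2) \<in> borel_measurable \<mu>"
      using assms[THEN sq_int_measurable] by measurable
    show "AE g in \<mu>. norm ((cmod (F g + G g))\<^sup>2) \<le> norm (2 * (cmod (F g))\<^sup>2 + 2 * (cmod (G g))\<^sup>2)"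
      using norm_add_power2_le[of 1 "F _" "G _"] by simp
  qed
qed

lemma sq_int_cmult: "sq_int \<mu> F \<Longrightarrow> sq_int \<mu> (\<lambda>g. c * F g)"
  unfolding sq_int_def by (auto simp: norm_mult power_mult_distrib)

lemma sq_int_diff: "sq_int \<mu> F \<Longrightarrow> sq_int \<mu> G \<Longrightarrow> sq_int \<mu> (\<lambda>g. F g - G g)"
  using sq_int_add[of F "\<lambda>g. - 1 * G g"] sq_int_cmult[of G "- 1"] by simp

lemma sq_int_sum: "(\<And>i. i \<in> A \<Longrightarrow> sq_int \<mu> (F i)) \<Longrightarrow> sq_int \<mu> (\<lambda>g. \<Sum>i\<in>A. F i g)"
  by (induction A rule: infinite_finite_induct) (simp_all add: sq_int_add)

lemma L2_inner_self: "L2_inner \<mu> F F = complex_of_real (L2_normsq \<mu> F)"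
  unfolding L2_inner_def L2_normsq_def
  by (simp add: complex_norm_square[symmetric] flip: integral_complex_of_real)

lemma L2_inner_sum_left:
  "(\<And>i. i \<in> A \<Longrightarrow> sq_int \<mu> (F i)) \<Longrightarrow> sq_int \<mu> H \<Longrightarrow>
   L2_inner \<mu> (\<lambda>g. \<Sum>i\<in>A. F i g) H = (\<Sum>i\<in>A. L2_inner \<mu> (F i) H)"
  unfolding L2_inner_def using integrable_mult_cnj[of _ H] by (simp add: sum_distrib_right)

lemma L2_inner_sum_right:
  "(\<And>i. i \<in> A \<Longrightarrow> sq_int \<mu> (F i)) \<Longrightarrow> sq_int \<mu> H \<Longrightarrow>
   L2_inner \<mu> H (\<lambda>g. \<Sum>i\<in>A. F i g) = (\<Sum>i\<in>A. L2_inner \<mu> H (F i))"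
  unfolding L2_inner_def using integrable_mult_cnj[of H] by (simp add: sum_distrib_left)

lemma power2_L2_norm: "(L2_norm \<mu> F)\<^sup>2 = L2_normsq \<mu> F"
  unfolding L2_norm_def L2_normsq_def by simp

lemma L2_norm_nonneg: "0 \<le> L2_norm \<mu> F"
  unfolding L2_norm_def L2_normsq_def by simp

lemma L2_norm_cong_AE:
  assumes [measurable]: "F \<in> borel_measurable \<mu>" "G \<in> borel_measurable \<mu>"
    and "AE g in \<mu>. F g = G g"
  shows "L2_norm \<mu> F = L2_norm \<mu> G"
  unfolding L2_norm_def L2_normsq_def
  by (rule arg_cong[where f = sqrt], rule integral_cong_AE) (use assms(3) in \<open>auto elim: AE_mp\<close>)

lemma L2_norm_eq_0_iff: "sq_int \<mu> F \<Longrightarrow> L2_norm \<mu> F = 0 \<longleftrightarrow> (AE g in \<mu>. F g = 0)"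
  unfolding L2_norm_def L2_normsq_def sq_int_def
  by (subst real_sqrt_eq_zero_cancel_iff, subst integral_nonneg_eq_0_iff_AE) auto

lemma L2_norm_cmult: "L2_norm \<mu> (\<lambda>g. c * F g) = cmod c * L2_norm \<mu> F"
  unfolding L2_norm_def L2_normsq_def by (simp add: norm_mult power_mult_distrib real_sqrt_mult)

lemma L2_norm_minus_commute: "L2_norm \<mu> (\<lambda>g. F g - G g) = L2_norm \<mu> (\<lambda>g. G g - F g)"
  unfolding L2_norm_def L2_normsq_def by (simp add: norm_minus_commute)

lemma L2_normsq_add_eq_if_zero:
  assumes F: "sq_int \<mu> F" and G: "sq_int \<mu> G" and "L2_normsq \<mu> F = 0"
  shows "L2_normsq \<mu> (\<lambda>g. F g + G g) = L2_normsq \<mu> G"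
proof -
  have "AE g in \<mu>. F g = 0"
    using L2_norm_eq_0_iff[OF F] assms(3) by (simp add: L2_norm_def)
  then have "AE g in \<mu>. F g + G g = G g"
    by (rule AE_mp) simp
  then have "L2_norm \<mu> (\<lambda>g. F g + G g) = L2_norm \<mu> G"
    using sq_int_add[OF F G] G by (intro L2_norm_cong_AE) (auto intro: sq_int_measurable)
  then show ?thesis
    unfolding L2_norm_def by simp
qed

text \<open>Integrate \<open>norm_add_power2_le\<close> with the optimal weight \<open>t = \<parallel>G\<parallel> / \<parallel>F\<parallel>\<close>.\<close>

lemma L2_norm_triangle:
  assumes F: "sq_int \<mu> F" and G: "sq_int \<mu> G"
  shows "L2_norm \<mu> (\<lambda>g. F g + G g) \<le> L2_norm \<mu> F + L2_norm \<mu> G"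
proof -
  define a b where "a = L2_normsq \<mu> F" and "b = L2_normsq \<mu> G"
  have "a \<ge> 0" "b \<ge> 0"
    unfolding a_def b_def L2_normsq_def by simp_all
  consider "a = 0" | "b = 0" | "a > 0" "b > 0"
    using \<open>a \<ge> 0\<close> \<open>b \<ge> 0\<close> by fastforce
  then show ?thesis
  proof cases
    case 1
    then show ?thesis
      using L2_normsq_add_eq_if_zero[OF F G] L2_norm_nonneg[of F] by (simp add: a_def b_def L2_norm_def)
  next
    case 2
    then show ?thesis
      using L2_normsq_add_eq_if_zero[OF G F] L2_norm_nonneg[of G]
      by (simp add: a_def b_def L2_norm_def add.commute)
  next
    case 3
    define t where "t = sqrt b / sqrt a"
    have "t > 0"
      unfolding t_def using 3 by simp
    have "L2_normsq \<mu> (\<lambda>g. F g + G g)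
        \<le> (\<integral>g. (1 + t) * (cmod (F g))\<^sup>2 + (1 + 1 / t) * (cmod (G g))\<^sup>2 \<partial>\<mu>)"
      unfolding L2_normsq_def using F G sq_int_add[OF F G]
      by (intro integral_mono norm_add_power2_le[OF \<open>t > 0\<close>]) (auto simp: sq_int_def)
    also have "\<dots> = (1 + t) * a + (1 + 1 / t) * b"
      unfolding a_def b_def L2_normsq_def using F G by (simp add: sq_int_def)
    also have "\<dots> = (sqrt a + sqrt b)\<^sup>2"
      unfolding t_def using 3 by (simp add: field_simps power2_sum)
    finally show ?thesis
      unfolding L2_norm_def a_def[symmetric] b_def[symmetric] using 3 by (simp add: real_le_lsqrt)
  qed
qed

lemma L2_norm_triangle_diff:
  "sq_int \<mu> F \<Longrightarrow> sq_int \<mu> G \<Longrightarrow> sq_int \<mu> H \<Longrightarrow>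
   L2_norm \<mu> (\<lambda>g. F g - H g) \<le> L2_norm \<mu> (\<lambda>g. F g - G g) + L2_norm \<mu> (\<lambda>g. G g - H g)"
  using L2_norm_triangle[of "\<lambda>g. F g - G g" "\<lambda>g. G g - H g"] sq_int_diff by simp

lemma L2_norm_diff_diff_le:
  assumes "sq_int \<mu> F" "sq_int \<mu> G" "sq_int \<mu> F'" "sq_int \<mu> G'"
  shows "\<bar>L2_norm \<mu> (\<lambda>g. F g - G g) - L2_norm \<mu> (\<lambda>g. F' g - G' g)\<bar>
    \<le> L2_norm \<mu> (\<lambda>g. F g - F' g) + L2_norm \<mu> (\<lambda>g. G g - G' g)"
  using L2_norm_triangle_diff[OF assms(1,3,2)] L2_norm_triangle_diff[OF assms(3,4,2)]
    L2_norm_triangle_diff[OF assms(3,1,4)] L2_norm_triangle_diff[OF assms(1,2,4)]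
    L2_norm_minus_commute[of F F'] L2_norm_minus_commute[of G G']
  by linarith

lemma AE_eq_0_if_L2_norm_le_eps:
  assumes F: "sq_int \<mu> F" and le: "\<And>e. e > 0 \<Longrightarrow> L2_norm \<mu> F \<le> C * e"
  shows "AE g in \<mu>. F g = 0"
proof -
  have "L2_norm \<mu> F \<le> e" if "e > 0" for e
  proof -
    have "L2_norm \<mu> F \<le> C * (e / (\<bar>C\<bar> + 1))"
      using that by (intro le) simp
    also have "\<dots> \<le> (\<bar>C\<bar> + 1) * (e / (\<bar>C\<bar> + 1))"
      using that by (intro mult_right_mono) auto
    also have "\<dots> = e"
      by simp
    finally show ?thesis .
  qed
  then have "L2_norm \<mu> F \<le> 0"
    by (rule field_le_epsilon) simp
  then have "L2_norm \<mu> F = 0"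
    using L2_norm_nonneg[of F] by simp
  then show ?thesis
    using L2_norm_eq_0_iff[OF F] by simp
qed

lemma AE_bounded_if_summable_nn_integral:
  fixes u :: "nat \<Rightarrow> 'g \<Rightarrow> real"
  assumes [measurable]: "\<And>k. u k \<in> borel_measurable \<mu>"
    and "(\<Sum>k. \<integral>\<^sup>+ g. ennreal (u k g) \<partial>\<mu>) < \<infinity>"
  shows "AE g in \<mu>. \<exists>B. \<forall>k. u k g \<le> B"
proof -
  have "(\<integral>\<^sup>+ g. (\<Sum>k. ennreal (u k g)) \<partial>\<mu>) < \<infinity>"
    using assms(2) by (subst nn_integral_suminf) auto
  then have "AE g in \<mu>. (\<Sum>k. ennreal (u k g)) \<noteq> \<infinity>"
    by (intro nn_integral_PInf_AE) auto
  then show ?thesis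
  proof (rule AE_mp, intro AE_I2 impI exI allI)
    fix g k
    assume fin: "(\<Sum>k. ennreal (u k g)) \<noteq> \<infinity>"
    have "ennreal (u k g) \<le> (\<Sum>k. ennreal (u k g))"
      using sum_le_suminf[OF summableI, of "{k}" "\<lambda>k. ennreal (u k g)"] by simp
    then have "enn2real (ennreal (u k g)) \<le> enn2real (\<Sum>k. ennreal (u k g))"
      using fin by (intro enn2real_mono) (auto simp: top.not_eq_extremum)
    then show "u k g \<le> enn2real (\<Sum>k. ennreal (u k g))"
      by (smt (verit) enn2real_ennreal ennreal_neg)
  qed
qed

lemma AE_summable_if_L2_normsq_le_geometric:
  assumes sq: "\<And>k. sq_int \<mu> (d k)" and le: "\<And>k. L2_normsq \<mu> (d k) \<le> C * (1/16) ^ k"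
  shows "AE g in \<mu>. summable (\<lambda>k. d k g)"
proof -
  have [measurable]: "d k \<in> borel_measurable \<mu>" for k
    using sq by (rule sq_int_measurable)
  have "0 \<le> L2_normsq \<mu> (d 0)"
    unfolding L2_normsq_def by simp
  then have "C \<ge> 0"
    using le[of 0] by simp
  have "(\<integral>\<^sup>+ g. ennreal (4 ^ k * (cmod (d k g))\<^sup>2) \<partial>\<mu>) = ennreal (4 ^ k * L2_normsq \<mu> (d k))" for k
    unfolding L2_normsq_def using sq[of k]
    by (subst nn_integral_eq_integral) (auto simp: sq_int_def)
  also have "\<dots> k \<le> ennreal (C * (1/4) ^ k)" for k
  proof -
    have "4 ^ k * L2_normsq \<mu> (d k) \<le> 4 ^ k * (C * (1/16) ^ k)"
      using le[of k] by simp
    also have "\<dots> = C * (1/4) ^ k"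
    proof -
      have "(16::real) ^ k = 4 ^ k * 4 ^ k"
        by (simp flip: power_mult_distrib)
      then show ?thesis
        by (simp add: power_divide)
    qed
    finally show ?thesis
      by (rule ennreal_leI)
  qed
  finally have "(\<Sum>k. \<integral>\<^sup>+ g. ennreal (4 ^ k * (cmod (d k g))\<^sup>2) \<partial>\<mu>) \<le> (\<Sum>k. ennreal (C * (1/4) ^ k))"
    by (intro suminf_le) auto
  also have "\<dots> < \<infinity>"
    using \<open>C \<ge> 0\<close> by (simp add: ennreal_suminf_neq_top less_top summable_geometric)
  finally have "AE g in \<mu>. \<exists>B. \<forall>k. 4 ^ k * (cmod (d k g))\<^sup>2 \<le> B"
    by (intro AE_bounded_if_summable_nn_integral) auto
  then show ?thesis
    by (rule AE_mp) (auto intro: summable_if_weighted_power2_bounded)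
qed

end

section \<open>Extending an isometry from a dense set into \<open>L\<^sup>2\<close>\<close>

text \<open>The isometry is given on representations \<open>r\<close> of the elements \<open>X r\<close> of a dense set; that
  \<open>\<Phi> r\<close> depends only on \<open>X r\<close> (up to null sets) is not assumed but derived.\<close>

locale dense_L2_isometry = T: cinner_space scT ipT
  for scT :: "complex \<Rightarrow> 't::ab_group_add \<Rightarrow> 't" and ipT +
  fixes \<mu> :: "'g measure" and reps :: "'r set" and X :: "'r \<Rightarrow> 't" and \<Phi> :: "'r \<Rightarrow> 'g \<Rightarrow> complex"
  assumes sq_int_\<Phi>: "r \<in> reps \<Longrightarrow> sq_int \<mu> (\<Phi> r)"
    and L2_normsq_\<Phi>: "r \<in> reps \<Longrightarrow> L2_normsq \<mu> (\<Phi> r) = (hnorm ipT (X r))\<^sup>2"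
    and dense_X: "e > 0 \<Longrightarrow> \<exists>r\<in>reps. hnorm ipT (x - X r) < e"
    and add_reps: "r \<in> reps \<Longrightarrow> r' \<in> reps \<Longrightarrow>
      \<exists>r''\<in>reps. X r'' = X r + X r' \<and> \<Phi> r'' = (\<lambda>g. \<Phi> r g + \<Phi> r' g)"
    and scale_reps: "r \<in> reps \<Longrightarrow> \<exists>r'\<in>reps. X r' = scT c (X r) \<and> \<Phi> r' = (\<lambda>g. c * \<Phi> r g)"
begin

lemma L2_norm_\<Phi>_diff:
  assumes "r \<in> reps" "r' \<in> reps"
  shows "L2_norm \<mu> (\<lambda>g. \<Phi> r g - \<Phi> r' g) = hnorm ipT (X r - X r')"
proof -
  obtain m where m: "m \<in> reps" "X m = scT (- 1) (X r')" "\<Phi> m = (\<lambda>g. - 1 * \<Phi> r' g)"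
    using scale_reps[OF assms(2)] by blast
  obtain d where "d \<in> reps" "X d = X r + X m" "\<Phi> d = (\<lambda>g. \<Phi> r g + \<Phi> m g)"
    using add_reps[OF assms(1) m(1)] by blast
  then have "X d = X r - X r'" "\<Phi> d = (\<lambda>g. \<Phi> r g - \<Phi> r' g)"
    using m by simp_all
  then show ?thesis
    using L2_normsq_\<Phi>[OF \<open>d \<in> reps\<close>] T.hnorm_nonneg by (simp add: L2_norm_def)
qed

lemma AE_\<Phi>_eq_if_X_eq:
  assumes "r \<in> reps" "r' \<in> reps" "X r = X r'"
  shows "AE g in \<mu>. \<Phi> r g = \<Phi> r' g"
  using L2_norm_\<Phi>_diff[OF assms(1,2)] L2_norm_eq_0_iff[OF sq_int_diff[OF sq_int_\<Phi> sq_int_\<Phi>]] assms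
  by (auto elim: AE_mp)

definition approx :: "'t \<Rightarrow> nat \<Rightarrow> 'r" where
  "approx x k = (SOME r. r \<in> reps \<and> hnorm ipT (x - X r) < (1/4) ^ k)"

lemma approx_in_reps: "approx x k \<in> reps"
  and hnorm_approx_less: "hnorm ipT (x - X (approx x k)) < (1/4) ^ k"
proof -
  have "\<exists>r. r \<in> reps \<and> hnorm ipT (x - X r) < (1/4) ^ k"
    using dense_X[of "(1/4) ^ k"] by auto
  from someI_ex[OF this] show "approx x k \<in> reps" "hnorm ipT (x - X (approx x k)) < (1/4) ^ k"
    unfolding approx_def by auto
qed

lemma hnorm_approx_tendsto: "(\<lambda>k. hnorm ipT (x - X (approx x k))) \<longlonglongrightarrow> 0"
proof (rule Lim_null_comparison)
  show "\<forall>\<^sub>F k in sequentially. norm (hnorm ipT (x - X (approx x k))) \<le> (1/4) ^ k"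
    using hnorm_approx_less T.hnorm_nonneg by (simp add: less_imp_le)
  show "(\<lambda>k. (1/4::real) ^ k) \<longlonglongrightarrow> 0"
    by (rule LIMSEQ_realpow_zero) auto
qed

lemma hnorm_approx_diff_tendsto: "(\<lambda>k. hnorm ipT (X (approx x k) - y)) \<longlonglongrightarrow> hnorm ipT (x - y)"
proof -
  have "\<bar>hnorm ipT (X (approx x k) - y) - hnorm ipT (x - y)\<bar> \<le> hnorm ipT (x - X (approx x k))" for k
    using T.hnorm_diff_diff_le[of "X (approx x k)" y x y]
      T.hnorm_minus_commute[of "X (approx x k)" x] by simp
  then have "(\<lambda>k. hnorm ipT (X (approx x k) - y) - hnorm ipT (x - y)) \<longlonglongrightarrow> 0"
    by (intro Lim_null_comparison[OF _ hnorm_approx_tendsto[of x]]) auto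
  then show ?thesis
    by (rule LIM_zero_cancel)
qed

text \<open>Where the transforms of the approximants diverge (a null set, see below), \<open>lim\<close> yields an
  unspecified value.\<close>

definition extension :: "'t \<Rightarrow> 'g \<Rightarrow> complex" where
  "extension x g = lim (\<lambda>k. \<Phi> (approx x k) g)"

lemma extension_measurable [measurable]: "extension x \<in> borel_measurable \<mu>"
  unfolding extension_def
  by (rule borel_measurable_lim_metric) (rule sq_int_measurable[OF sq_int_\<Phi>[OF approx_in_reps]])

text \<open>The approximants are chosen so fast that the \<open>L\<^sup>2\<close> norms of consecutive differences decay
  geometrically, which forces pointwise convergence almost everywhere.\<close>

lemma AE_approx_tendsto_extension: "AE g in \<mu>. (\<lambda>k. \<Phi> (approx x k) g) \<longlonglongrightarrow> extension x g"
proof -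
  define d where "d k g = \<Phi> (approx x (Suc k)) g - \<Phi> (approx x k) g" for k g
  have "L2_normsq \<mu> (d k) \<le> 4 * (1/16) ^ k" for k
  proof -
    have "hnorm ipT (X (approx x (Suc k)) - X (approx x k))
        \<le> hnorm ipT (x - X (approx x (Suc k))) + hnorm ipT (x - X (approx x k))"
      using T.hnorm_triangle_diff[of "X (approx x (Suc k))" "X (approx x k)" x]
        T.hnorm_minus_commute[of x "X (approx x (Suc k))"] by simp
    also have "\<dots> \<le> 2 * (1/4) ^ k"
      using hnorm_approx_less[of x "Suc k"] hnorm_approx_less[of x k]
        T.hnorm_nonneg[of "x - X (approx x (Suc k))"] by simp
    finally have "(L2_norm \<mu> (d k))\<^sup>2 \<le> (2 * (1/4) ^ k)\<^sup>2"
      unfolding d_def L2_norm_\<Phi>_diff[OF approx_in_reps approx_in_reps]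
      by (intro power_mono T.hnorm_nonneg)
    then have "L2_normsq \<mu> (d k) \<le> (2 * (1/4) ^ k)\<^sup>2"
      by (simp only: power2_L2_norm)
    also have "(2 * (1/4::real) ^ k)\<^sup>2 = 4 * (1/16) ^ k"
      by (simp add: power2_eq_square flip: power_mult_distrib)
    finally show ?thesis .
  qed
  then have "AE g in \<mu>. summable (\<lambda>k. d k g)"
    unfolding d_def
    by (intro AE_summable_if_L2_normsq_le_geometric sq_int_diff sq_int_\<Phi> approx_in_reps)
  then show ?thesis
  proof (rule AE_mp, intro AE_I2 impI)
    fix g
    assume "summable (\<lambda>k. d k g)"
    then have "convergent (\<lambda>n. \<Phi> (approx x n) g - \<Phi> (approx x 0) g)"
      using sum_lessThan_telescope[of "\<lambda>k. \<Phi> (approx x k) g"]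
      by (simp add: summable_iff_convergent d_def)
    then have "convergent (\<lambda>n. \<Phi> (approx x n) g)"
      by (simp add: convergent_diff_const_right_iff)
    then show "(\<lambda>k. \<Phi> (approx x k) g) \<longlonglongrightarrow> extension x g"
      unfolding extension_def by (simp add: convergent_LIMSEQ_iff)
  qed
qed

text \<open>Fatou's lemma along the approximants.\<close>

lemma nn_integral_extension_diff_le:
  assumes r: "r \<in> reps"
  shows "(\<integral>\<^sup>+ g. ennreal ((cmod (extension x g - \<Phi> r g))\<^sup>2) \<partial>\<mu>) \<le> ennreal ((hnorm ipT (x - X r))\<^sup>2)"
proof -
  define v where "v k g = ennreal ((cmod (\<Phi> (approx x k) g - \<Phi> r g))\<^sup>2)" for k g
  have [measurable]: "\<Phi> r \<in> borel_measurable \<mu>" "\<Phi> (approx x k) \<in> borel_measurable \<mu>" for k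
    by (intro sq_int_measurable sq_int_\<Phi> r approx_in_reps)+
  have [measurable]: "v k \<in> borel_measurable \<mu>" for k
    unfolding v_def by measurable
  have "AE g in \<mu>. ennreal ((cmod (extension x g - \<Phi> r g))\<^sup>2) = liminf (\<lambda>k. v k g)"
    using AE_approx_tendsto_extension[of x]
  proof (rule AE_mp, intro AE_I2 impI)
    fix g
    assume "(\<lambda>k. \<Phi> (approx x k) g) \<longlonglongrightarrow> extension x g"
    then have "(\<lambda>k. v k g) \<longlonglongrightarrow> ennreal ((cmod (extension x g - \<Phi> r g))\<^sup>2)"
      unfolding v_def by (intro tendsto_ennrealI tendsto_intros)
    then show "ennreal ((cmod (extension x g - \<Phi> r g))\<^sup>2) = liminf (\<lambda>k. v k g)"
      by (simp add: lim_imp_Liminf)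
  qed
  then have "(\<integral>\<^sup>+ g. ennreal ((cmod (extension x g - \<Phi> r g))\<^sup>2) \<partial>\<mu>)
      = (\<integral>\<^sup>+ g. liminf (\<lambda>k. v k g) \<partial>\<mu>)"
    by (rule nn_integral_cong_AE)
  also have "\<dots> \<le> liminf (\<lambda>k. integral\<^sup>N \<mu> (v k))"
    by (rule nn_integral_liminf) measurable
  also have "(\<lambda>k. integral\<^sup>N \<mu> (v k)) = (\<lambda>k. ennreal ((hnorm ipT (X (approx x k) - X r))\<^sup>2))"
  proof
    fix k
    have sq: "sq_int \<mu> (\<lambda>g. \<Phi> (approx x k) g - \<Phi> r g)"
      by (intro sq_int_diff sq_int_\<Phi> approx_in_reps r)
    then have "integral\<^sup>N \<mu> (v k) = ennreal ((L2_norm \<mu> (\<lambda>g. \<Phi> (approx x k) g - \<Phi> r g))\<^sup>2)"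
      unfolding v_def L2_norm_def L2_normsq_def sq_int_def
      by (subst nn_integral_eq_integral) auto
    then show "integral\<^sup>N \<mu> (v k) = ennreal ((hnorm ipT (X (approx x k) - X r))\<^sup>2)"
      by (simp add: L2_norm_\<Phi>_diff approx_in_reps r)
  qed
  also have "liminf (\<lambda>k. ennreal ((hnorm ipT (X (approx x k) - X r))\<^sup>2))
      = ennreal ((hnorm ipT (x - X r))\<^sup>2)"
    using hnorm_approx_diff_tendsto[of x "X r"]
    by (intro lim_imp_Liminf tendsto_ennrealI tendsto_power) simp_all
  finally show ?thesis .
qed

lemma sq_int_extension_diff:
  assumes "r \<in> reps"
  shows "sq_int \<mu> (\<lambda>g. extension x g - \<Phi> r g)"
  unfolding sq_int_def
proof
  have [measurable]: "\<Phi> r \<in> borel_measurable \<mu>"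
    by (intro sq_int_measurable sq_int_\<Phi> assms)
  show "(\<lambda>g. extension x g - \<Phi> r g) \<in> borel_measurable \<mu>"
    by measurable
  show "integrable \<mu> (\<lambda>g. (cmod (extension x g - \<Phi> r g))\<^sup>2)"
  proof (rule integrableI_bounded)
    have "(\<integral>\<^sup>+ g. ennreal (norm ((cmod (extension x g - \<Phi> r g))\<^sup>2)) \<partial>\<mu>)
        \<le> ennreal ((hnorm ipT (x - X r))\<^sup>2)"
      using nn_integral_extension_diff_le[OF assms, of x] by simp
    then show "(\<integral>\<^sup>+ g. ennreal (norm ((cmod (extension x g - \<Phi> r g))\<^sup>2)) \<partial>\<mu>) < \<infinity>"
      by (rule le_less_trans) simp
  qed measurable
qed

lemma sq_int_extension: "sq_int \<mu> (extension x)"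
proof -
  let ?r = "approx x 0"
  have "sq_int \<mu> (\<lambda>g. (extension x g - \<Phi> ?r g) + \<Phi> ?r g)"
    by (intro sq_int_add sq_int_extension_diff sq_int_\<Phi> approx_in_reps)
  then show ?thesis
    by simp
qed

lemma L2_norm_extension_diff_le:
  assumes "r \<in> reps"
  shows "L2_norm \<mu> (\<lambda>g. extension x g - \<Phi> r g) \<le> hnorm ipT (x - X r)"
proof -
  have "ennreal ((L2_norm \<mu> (\<lambda>g. extension x g - \<Phi> r g))\<^sup>2)
      = (\<integral>\<^sup>+ g. ennreal ((cmod (extension x g - \<Phi> r g))\<^sup>2) \<partial>\<mu>)"
    using sq_int_extension_diff[OF assms, of x] unfolding L2_norm_def L2_normsq_def sq_int_def
    by (subst nn_integral_eq_integral) auto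
  also have "\<dots> \<le> ennreal ((hnorm ipT (x - X r))\<^sup>2)"
    by (rule nn_integral_extension_diff_le[OF assms])
  finally have "(L2_norm \<mu> (\<lambda>g. extension x g - \<Phi> r g))\<^sup>2 \<le> (hnorm ipT (x - X r))\<^sup>2"
    by (simp add: ennreal_le_iff)
  then show ?thesis
    using T.hnorm_nonneg by (rule power2_le_imp_le)
qed

lemma AE_extension_on_reps:
  assumes "r \<in> reps"
  shows "AE g in \<mu>. extension (X r) g = \<Phi> r g"
proof -
  have "L2_norm \<mu> (\<lambda>g. extension (X r) g - \<Phi> r g) = 0"
    using L2_norm_extension_diff_le[OF assms, of "X r"]
      L2_norm_nonneg[of \<mu> "\<lambda>g. extension (X r) g - \<Phi> r g"] by simp
  then show ?thesis
    using L2_norm_eq_0_iff[OF sq_int_extension_diff[OF assms]] by (auto elim: AE_mp)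
qed

lemma L2_norm_extension_diff: "L2_norm \<mu> (\<lambda>g. extension x g - extension y g) = hnorm ipT (x - y)"
proof -
  let ?A = "L2_norm \<mu> (\<lambda>g. extension x g - extension y g)"
  have bound: "\<bar>?A - hnorm ipT (x - y)\<bar> \<le> 4 * e" if e: "e > 0" for e
  proof -
    obtain r where r: "r \<in> reps" "hnorm ipT (x - X r) < e"
      using dense_X[OF e] by blast
    obtain r' where r': "r' \<in> reps" "hnorm ipT (y - X r') < e"
      using dense_X[OF e] by blast
    have "\<bar>?A - L2_norm \<mu> (\<lambda>g. \<Phi> r g - \<Phi> r' g)\<bar>
        \<le> L2_norm \<mu> (\<lambda>g. extension x g - \<Phi> r g) + L2_norm \<mu> (\<lambda>g. extension y g - \<Phi> r' g)"
      by (intro L2_norm_diff_diff_le sq_int_extension sq_int_\<Phi> r(1) r'(1))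
    moreover have "\<bar>hnorm ipT (x - y) - hnorm ipT (X r - X r')\<bar> \<le> hnorm ipT (x - X r) + hnorm ipT (y - X r')"
      by (rule T.hnorm_diff_diff_le)
    ultimately show ?thesis
      using L2_norm_\<Phi>_diff[OF r(1) r'(1)] L2_norm_extension_diff_le[OF r(1), of x]
        L2_norm_extension_diff_le[OF r'(1), of y] r(2) r'(2)
      by linarith
  qed
  have "?A - hnorm ipT (x - y) = 0"
  proof (rule dense_eq0_I)
    fix e :: real
    assume "e > 0"
    then show "\<bar>?A - hnorm ipT (x - y)\<bar> \<le> e"
      using bound[of "e / 4"] by simp
  qed
  then show ?thesis
    by simp
qed

lemma AE_extension_add: "AE g in \<mu>. extension (x + y) g = extension x g + extension y g"
proof -
  have "AE g in \<mu>. extension (x + y) g - (extension x g + extension y g) = 0"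
  proof (rule AE_eq_0_if_L2_norm_le_eps)
    show "sq_int \<mu> (\<lambda>g. extension (x + y) g - (extension x g + extension y g))"
      by (intro sq_int_diff sq_int_add sq_int_extension)
    fix e :: real
    assume "e > 0"
    obtain r where r: "r \<in> reps" "hnorm ipT (x - X r) < e"
      using dense_X[OF \<open>e > 0\<close>] by blast
    obtain r' where r': "r' \<in> reps" "hnorm ipT (y - X r') < e"
      using dense_X[OF \<open>e > 0\<close>] by blast
    obtain s where s: "s \<in> reps" "X s = X r + X r'" "\<Phi> s = (\<lambda>g. \<Phi> r g + \<Phi> r' g)"
      using add_reps[OF r(1) r'(1)] by blast
    have "L2_norm \<mu> (\<lambda>g. extension (x + y) g - (extension x g + extension y g))
        \<le> L2_norm \<mu> (\<lambda>g. extension (x + y) g - \<Phi> s g)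
          + L2_norm \<mu> (\<lambda>g. \<Phi> s g - (extension x g + extension y g))"
      by (intro L2_norm_triangle_diff sq_int_add sq_int_extension sq_int_\<Phi> s(1))
    also have "L2_norm \<mu> (\<lambda>g. \<Phi> s g - (extension x g + extension y g))
        = L2_norm \<mu> (\<lambda>g. (\<Phi> r g - extension x g) + (\<Phi> r' g - extension y g))"
      by (simp add: s(3) algebra_simps)
    also have "\<dots> \<le> L2_norm \<mu> (\<lambda>g. \<Phi> r g - extension x g) + L2_norm \<mu> (\<lambda>g. \<Phi> r' g - extension y g)"
      by (intro L2_norm_triangle sq_int_diff sq_int_extension sq_int_\<Phi> r(1) r'(1))
    finally show "L2_norm \<mu> (\<lambda>g. extension (x + y) g - (extension x g + extension y g)) \<le> 4 * e"
      using L2_norm_extension_diff_le[OF s(1), of "x + y"] s(2)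
        T.hnorm_triangle[of "x - X r" "y - X r'"]
        L2_norm_extension_diff_le[OF r(1), of x] L2_norm_extension_diff_le[OF r'(1), of y]
        L2_norm_minus_commute[of \<mu> "\<Phi> r"] L2_norm_minus_commute[of \<mu> "\<Phi> r'"] r(2) r'(2)
      by (simp add: algebra_simps)
  qed
  then show ?thesis
    by (rule AE_mp) simp
qed

lemma AE_extension_scale: "AE g in \<mu>. extension (scT c x) g = c * extension x g"
proof -
  have "AE g in \<mu>. extension (scT c x) g - c * extension x g = 0"
  proof (rule AE_eq_0_if_L2_norm_le_eps)
    show "sq_int \<mu> (\<lambda>g. extension (scT c x) g - c * extension x g)"
      by (intro sq_int_diff sq_int_cmult sq_int_extension)
    fix e :: real
    assume "e > 0"
    obtain r where r: "r \<in> reps" "hnorm ipT (x - X r) < e"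
      using dense_X[OF \<open>e > 0\<close>] by blast
    obtain s where s: "s \<in> reps" "X s = scT c (X r)" "\<Phi> s = (\<lambda>g. c * \<Phi> r g)"
      using scale_reps[OF r(1)] by blast
    have "L2_norm \<mu> (\<lambda>g. extension (scT c x) g - c * extension x g)
        \<le> L2_norm \<mu> (\<lambda>g. extension (scT c x) g - \<Phi> s g) + L2_norm \<mu> (\<lambda>g. \<Phi> s g - c * extension x g)"
      by (intro L2_norm_triangle_diff sq_int_cmult sq_int_extension sq_int_\<Phi> s(1))
    moreover have "L2_norm \<mu> (\<lambda>g. extension (scT c x) g - \<Phi> s g) \<le> cmod c * hnorm ipT (x - X r)"
      using L2_norm_extension_diff_le[OF s(1), of "scT c x"]
      by (simp add: s(2) T.hnorm_scale flip: T.scale_right_diff_distrib)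
    moreover have "L2_norm \<mu> (\<lambda>g. \<Phi> s g - c * extension x g) = cmod c * L2_norm \<mu> (\<lambda>g. extension x g - \<Phi> r g)"
      using L2_norm_cmult[of \<mu> c "\<lambda>g. \<Phi> r g - extension x g"] L2_norm_minus_commute[of \<mu> "\<Phi> r"]
      by (simp add: s(3) right_diff_distrib)
    moreover have "cmod c * L2_norm \<mu> (\<lambda>g. extension x g - \<Phi> r g) \<le> cmod c * e"
      using L2_norm_extension_diff_le[OF r(1), of x] r(2) by (intro mult_left_mono) auto
    moreover have "cmod c * hnorm ipT (x - X r) \<le> cmod c * e"
      using r(2) by (intro mult_left_mono) auto
    ultimately show "L2_norm \<mu> (\<lambda>g. extension (scT c x) g - c * extension x g) \<le> 2 * cmod c * e"
      by linarith
  qed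
  then show ?thesis
    by (rule AE_mp) simp
qed

lemma AE_extension_unique:
  assumes sq_int': "\<And>x. sq_int \<mu> (V' x)"
    and reps': "\<And>r. r \<in> reps \<Longrightarrow> AE g in \<mu>. V' (X r) g = \<Phi> r g"
    and cont': "\<And>x Y. (\<lambda>k. hnorm ipT (Y k - x)) \<longlonglongrightarrow> 0 \<Longrightarrow>
      (\<lambda>k. L2_normsq \<mu> (\<lambda>g. V' (Y k) g - V' x g)) \<longlonglongrightarrow> 0"
  shows "AE g in \<mu>. V' x g = extension x g"
proof -
  define Y where "Y k = X (approx x k)" for k
  have "(\<lambda>k. hnorm ipT (Y k - x)) \<longlonglongrightarrow> 0"
    unfolding Y_def using hnorm_approx_tendsto[of x] T.hnorm_minus_commute by simp
  then have "(\<lambda>k. L2_norm \<mu> (\<lambda>g. V' (Y k) g - V' x g)) \<longlonglongrightarrow> 0"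
    unfolding L2_norm_def using tendsto_real_sqrt[OF cont'] by simp
  then have lim: "(\<lambda>k. L2_norm \<mu> (\<lambda>g. V' (Y k) g - V' x g) + hnorm ipT (x - Y k)) \<longlonglongrightarrow> 0"
    using tendsto_add[OF _ hnorm_approx_tendsto[of x]] unfolding Y_def by simp
  have "L2_norm \<mu> (\<lambda>g. V' x g - extension x g) \<le> L2_norm \<mu> (\<lambda>g. V' (Y k) g - V' x g) + hnorm ipT (x - Y k)"
    for k
  proof -
    have a: "approx x k \<in> reps"
      by (rule approx_in_reps)
    have "L2_norm \<mu> (\<lambda>g. V' (Y k) g - \<Phi> (approx x k) g) = 0"
      using reps'[OF a] L2_norm_eq_0_iff[OF sq_int_diff[OF sq_int' sq_int_\<Phi>[OF a]]]
      unfolding Y_def by (auto elim: AE_mp)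
    moreover have "L2_norm \<mu> (\<lambda>g. V' (Y k) g - extension x g)
        \<le> L2_norm \<mu> (\<lambda>g. V' (Y k) g - \<Phi> (approx x k) g)
          + L2_norm \<mu> (\<lambda>g. \<Phi> (approx x k) g - extension x g)"
      by (intro L2_norm_triangle_diff sq_int' sq_int_\<Phi> a sq_int_extension)
    moreover have "L2_norm \<mu> (\<lambda>g. V' x g - extension x g)
        \<le> L2_norm \<mu> (\<lambda>g. V' x g - V' (Y k) g) + L2_norm \<mu> (\<lambda>g. V' (Y k) g - extension x g)"
      by (intro L2_norm_triangle_diff sq_int' sq_int_extension)
    ultimately show ?thesis
      using L2_norm_extension_diff_le[OF a, of x]
        L2_norm_minus_commute[of \<mu> "\<Phi> (approx x k)" "extension x"]
        L2_norm_minus_commute[of \<mu> "V' x" "V' (Y k)"]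
      unfolding Y_def by linarith
  qed
  then have "L2_norm \<mu> (\<lambda>g. V' x g - extension x g) \<le> 0"
    by (intro LIMSEQ_le_const[OF lim]) auto
  then have "AE g in \<mu>. V' x g - extension x g = 0"
    using L2_norm_eq_0_iff[OF sq_int_diff[OF sq_int' sq_int_extension]] L2_norm_nonneg
    by (metis order.antisym)
  then show ?thesis
    by (rule AE_mp) simp
qed

end

section \<open>The wavelet-Plancherel transform\<close>

lemma sum_lessThan_add_split:
  fixes h :: "nat \<Rightarrow> 'a::comm_monoid_add"
  shows "(\<Sum>i<n + m. h i) = (\<Sum>i<n. h i) + (\<Sum>i<m. h (n + i))"
  by (induction m) (simp_all add: add_ac)

locale wavelet_plancherel_setting =
  S: cinner_space sc ip + W: cinner_space scW ipW + T: cinner_space scT ipT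
  for sc :: "complex \<Rightarrow> 's::ab_group_add \<Rightarrow> 's" and ip
    and scW :: "complex \<Rightarrow> 'w::ab_group_add \<Rightarrow> 'w" and ipW
    and scT :: "complex \<Rightarrow> 't::ab_group_add \<Rightarrow> 't" and ipT +
  fixes \<mu> :: "'g::{topological_group_add, t2_space} measure"
    and \<pi> :: "'g \<Rightarrow> 's \<Rightarrow> 's" and D :: "'s set" and K :: "'s \<Rightarrow> 's"
    and j :: "'s \<Rightarrow> 'w" and tens :: "'w \<Rightarrow> 's \<Rightarrow> 't"
  assumes sets_\<mu>: "sets \<mu> = sets borel"
    and \<pi>_add: "\<pi> g (x + y) = \<pi> g x + \<pi> g y"
    and \<pi>_continuous: "((\<lambda>g. hnorm ip (\<pi> g s - \<pi> g0 s)) \<longlongrightarrow> 0) (at g0)"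
    and zero_in_D: "0 \<in> D"
    and K_add: "x \<in> D \<Longrightarrow> y \<in> D \<Longrightarrow> K (x + y) = K x + K y"
    and inj_on_K: "inj_on K D"
    and orthogonality: "f1 \<in> D \<Longrightarrow> f2 \<in> D \<Longrightarrow>
      L2_inner \<mu> (wavelet ip \<pi> f1 s1) (wavelet ip \<pi> f2 s2) = ip s1 s2 * ip (K f2) (K f1)"
    and ipW_j: "f1 \<in> D \<Longrightarrow> f2 \<in> D \<Longrightarrow> ipW (j f1) (j f2) = ip (K f1) (K f2)"
    and hdense_j: "hdense ipW (j ` D)"
    and tens_add_left: "tens (a + b) s = tens a s + tens b s"
    and tens_scale_right: "tens a (sc c s) = scT c (tens a s)"
    and ipT_tens: "ipT (tens a s) (tens b t) = cnj (ipW a b) * ip s t"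
    and tensors_dense: "e > 0 \<Longrightarrow> \<exists>(n::nat) a s. hnorm ipT (z - (\<Sum>i<n. tens (a i) (s i))) < e"
begin

lemma tens_diff_left: "tens (a - b) s = tens a s - tens b s"
  using tens_add_left[of "a - b" b s] by (simp add: eq_diff_eq)

lemma hnorm_tens: "hnorm ipT (tens a s) = hnorm ipW a * hnorm ip s"
proof -
  have "Re (ipT (tens a s) (tens a s)) = Re (ipW a a) * Re (ip s s)"
    unfolding ipT_tens by (subst W.ip_self_real, subst S.ip_self_real) simp
  then show ?thesis
    unfolding hnorm_def by (simp add: real_sqrt_mult)
qed

lemma simple_tensors_dense:
  assumes "e > 0"
  shows "\<exists>(n::nat) f s. (\<forall>i<n. f i \<in> D) \<and> hnorm ipT (x - (\<Sum>i<n. tens (j (f i)) (s i))) < e"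
proof -
  obtain n :: nat and a s where approx: "hnorm ipT (x - (\<Sum>i<n. tens (a i) (s i))) < e / 2"
    using tensors_dense[of "e / 2" x] assms by auto
  define \<delta> where "\<delta> i = e / (2 * (real n + 1) * (hnorm ip (s i) + 1))" for i
  have "\<delta> i > 0" for i
    unfolding \<delta>_def using assms S.hnorm_nonneg[of "s i"] by simp
  then have "\<forall>i. \<exists>f\<in>D. hnorm ipW (a i - j f) < \<delta> i"
    using hdense_j unfolding hdense_def by blast
  then obtain f where f: "\<And>i. f i \<in> D" "\<And>i. hnorm ipW (a i - j (f i)) < \<delta> i"
    by metis
  have bound: "hnorm ipT (tens (a i - j (f i)) (s i)) \<le> e / (2 * (real n + 1))" for i
  proof -
    have "hnorm ipT (tens (a i - j (f i)) (s i)) \<le> \<delta> i * hnorm ip (s i)"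
      unfolding hnorm_tens using f(2)[of i] S.hnorm_nonneg[of "s i"] by (simp add: mult_right_mono)
    also have "\<dots> = e / (2 * (real n + 1)) * (hnorm ip (s i) / (hnorm ip (s i) + 1))"
      unfolding \<delta>_def by simp
    also have "\<dots> \<le> e / (2 * (real n + 1)) * 1"
      using assms S.hnorm_nonneg[of "s i"] by (intro mult_left_mono) auto
    finally show ?thesis
      by simp
  qed
  have "hnorm ipT ((\<Sum>i<n. tens (a i) (s i)) - (\<Sum>i<n. tens (j (f i)) (s i)))
      = hnorm ipT (\<Sum>i<n. tens (a i - j (f i)) (s i))"
    by (simp add: tens_diff_left sum_subtractf)
  also have "\<dots> \<le> (\<Sum>i<n. hnorm ipT (tens (a i - j (f i)) (s i)))"
    by (rule T.hnorm_sum)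
  also have "\<dots> \<le> real n * (e / (2 * (real n + 1)))"
    using sum_mono[of "{..<n}", OF bound] by simp
  also have "\<dots> < e / 2"
    using assms by (simp add: field_simps)
  finally have "hnorm ipT (x - (\<Sum>i<n. tens (j (f i)) (s i))) < e"
    using approx T.hnorm_triangle_diff[of x "\<Sum>i<n. tens (j (f i)) (s i)" "\<Sum>i<n. tens (a i) (s i)"]
    by linarith
  with f(1) have "(\<forall>i<n. f i \<in> D) \<and> hnorm ipT (x - (\<Sum>i<n. tens (j (f i)) (s i))) < e"
    by simp
  then show ?thesis
    by blast
qed

lemma continuous_on_wavelet: "continuous_on UNIV (wavelet ip \<pi> f s)"
proof (rule continuous_at_imp_continuous_on, intro ballI)
  fix g0 :: 'g
  have "((\<lambda>g. ip s (\<pi> g f) - ip s (\<pi> g0 f)) \<longlongrightarrow> 0) (at g0)"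
  proof (rule Lim_null_comparison)
    show "\<forall>\<^sub>F g in at g0. norm (ip s (\<pi> g f) - ip s (\<pi> g0 f)) \<le> hnorm ip s * hnorm ip (\<pi> g f - \<pi> g0 f)"
      using S.cauchy_schwarz by (simp flip: S.ip_diff_right)
    show "((\<lambda>g. hnorm ip s * hnorm ip (\<pi> g f - \<pi> g0 f)) \<longlongrightarrow> 0) (at g0)"
      using tendsto_mult_right_zero[OF \<pi>_continuous] by simp
  qed
  then show "isCont (wavelet ip \<pi> f s) g0"
    unfolding isCont_def wavelet_def by (rule LIM_zero_cancel)
qed

lemma wavelet_measurable: "wavelet ip \<pi> f s \<in> borel_measurable \<mu>"
  unfolding measurable_cong_sets[OF sets_\<mu> refl]
  by (rule borel_measurable_continuous_onI[OF continuous_on_wavelet])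

text \<open>Square integrability of \<open>V\<^sub>f[s]\<close> comes for free from the orthogonality relations: the
  integral defining \<open>\<parallel>V\<^sub>f[s]\<parallel>\<^sup>2\<close> is nonzero, and a non-integrable function has Bochner integral 0.\<close>

lemma sq_int_wavelet:
  assumes f: "f \<in> D"
  shows "sq_int \<mu> (wavelet ip \<pi> f s)"
proof (cases "f = 0 \<or> s = 0")
  case True
  then have "wavelet ip \<pi> f s = (\<lambda>g. 0)"
    unfolding wavelet_def using \<pi>_add[of _ 0 0] by auto
  then show ?thesis
    by simp
next
  case False
  let ?w = "wavelet ip \<pi> f s"
  have "K f \<noteq> 0"
    using False f zero_in_D inj_on_K K_add[OF zero_in_D zero_in_D] unfolding inj_on_def by force
  then have "L2_inner \<mu> ?w ?w \<noteq> 0"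
    using False orthogonality[OF f f, of s s] S.ip_self_eq_zero by auto
  then have "integrable \<mu> (\<lambda>g. ?w g * cnj (?w g))"
    unfolding L2_inner_def using not_integrable_integral_eq by blast
  then have "integrable \<mu> (\<lambda>g. norm (?w g * cnj (?w g)))"
    by (rule integrable_norm)
  then have "integrable \<mu> (\<lambda>g. (cmod (?w g))\<^sup>2)"
    by (simp add: norm_mult power2_eq_square)
  then show ?thesis
    unfolding sq_int_def using wavelet_measurable by simp
qed

lemma L2_inner_wavelet:
  assumes "f1 \<in> D" "f2 \<in> D"
  shows "L2_inner \<mu> (wavelet ip \<pi> f1 s1) (wavelet ip \<pi> f2 s2) = ipT (tens (j f1) s1) (tens (j f2) s2)"
  unfolding orthogonality[OF assms] ipT_tens ipW_j[OF assms] using S.ip_cnj_commute[of "K f1" "K f2"]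
  by simp

text \<open>An element \<open>\<Sum>i<n. j (f i) \<otimes> s i\<close> of the span of the simple tensors with windows
  \<open>f i \<in> D\<close> is handled through its representation \<open>(n, f, s)\<close>; that the wavelet transform
  does not depend on the representation is part of the theorem.\<close>

definition simple_reps :: "(nat \<times> (nat \<Rightarrow> 's) \<times> (nat \<Rightarrow> 's)) set" where
  "simple_reps = {(n, f, s). \<forall>i<n. f i \<in> D}"

fun tensor_sum :: "nat \<times> (nat \<Rightarrow> 's) \<times> (nat \<Rightarrow> 's) \<Rightarrow> 't" where
  "tensor_sum (n, f, s) = (\<Sum>i<n. tens (j (f i)) (s i))"

fun wavelet_sum :: "nat \<times> (nat \<Rightarrow> 's) \<times> (nat \<Rightarrow> 's) \<Rightarrow> 'g \<Rightarrow> complex" where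
  "wavelet_sum (n, f, s) = (\<lambda>g. \<Sum>i<n. wavelet ip \<pi> (f i) (s i) g)"

lemma sq_int_wavelet_sum: "r \<in> simple_reps \<Longrightarrow> sq_int \<mu> (wavelet_sum r)"
  by (cases r) (auto simp: simple_reps_def intro!: sq_int_sum sq_int_wavelet)

lemma L2_inner_wavelet_sum:
  assumes "r \<in> simple_reps" "r' \<in> simple_reps"
  shows "L2_inner \<mu> (wavelet_sum r) (wavelet_sum r') = ipT (tensor_sum r) (tensor_sum r')"
proof -
  obtain n f s n' f' s' where r: "r = (n, f, s)" "r' = (n', f', s')"
    by (cases r, cases r') auto
  have D: "\<forall>i<n. f i \<in> D" "\<forall>i<n'. f' i \<in> D"
    using assms unfolding r simple_reps_def by auto
  have sq: "i < n \<Longrightarrow> sq_int \<mu> (wavelet ip \<pi> (f i) (s i))"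
    and sq': "i' < n' \<Longrightarrow> sq_int \<mu> (wavelet ip \<pi> (f' i') (s' i'))" for i i'
    using D by (simp_all add: sq_int_wavelet)
  have "L2_inner \<mu> (wavelet_sum r) (wavelet_sum r')
      = (\<Sum>i<n. L2_inner \<mu> (wavelet ip \<pi> (f i) (s i)) (wavelet_sum r'))"
    unfolding r wavelet_sum.simps
    by (rule L2_inner_sum_left) (use sq sq' in \<open>auto intro: sq_int_sum\<close>)
  also have "\<dots> = (\<Sum>i<n. \<Sum>i'<n'. L2_inner \<mu> (wavelet ip \<pi> (f i) (s i)) (wavelet ip \<pi> (f' i') (s' i')))"
    unfolding r wavelet_sum.simps
    by (intro sum.cong refl L2_inner_sum_right) (use sq sq' in auto)
  also have "\<dots> = ipT (tensor_sum r) (tensor_sum r')"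
    unfolding r tensor_sum.simps using D
    by (subst T.ip_sum_left) (simp add: T.ip_sum_right L2_inner_wavelet)
  finally show ?thesis .
qed

lemma L2_normsq_wavelet_sum:
  "r \<in> simple_reps \<Longrightarrow> L2_normsq \<mu> (wavelet_sum r) = (hnorm ipT (tensor_sum r))\<^sup>2"
  using L2_inner_wavelet_sum[of r r] L2_inner_self[of \<mu> "wavelet_sum r"]
  by (simp add: T.power2_hnorm) (metis Re_complex_of_real)

lemma simple_reps_add:
  assumes "r \<in> simple_reps" "r' \<in> simple_reps"
  shows "\<exists>r''\<in>simple_reps. tensor_sum r'' = tensor_sum r + tensor_sum r'
    \<and> wavelet_sum r'' = (\<lambda>g. wavelet_sum r g + wavelet_sum r' g)"
proof -
  obtain n f s n' f' s' where r: "r = (n, f, s)" "r' = (n', f', s')"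
    by (cases r, cases r') auto
  let ?r = "(n + n', \<lambda>i. if i < n then f i else f' (i - n), \<lambda>i. if i < n then s i else s' (i - n))"
  show ?thesis
    using assms unfolding r
    by (intro bexI[of _ ?r]) (auto simp: simple_reps_def sum_lessThan_add_split)
qed

lemma simple_reps_scale:
  assumes "r \<in> simple_reps"
  shows "\<exists>r'\<in>simple_reps. tensor_sum r' = scT c (tensor_sum r) \<and> wavelet_sum r' = (\<lambda>g. c * wavelet_sum r g)"
proof -
  obtain n f s where r: "r = (n, f, s)"
    by (cases r) auto
  show ?thesis
    using assms unfolding r
    by (intro bexI[of _ "(n, f, \<lambda>i. sc c (s i))"])
      (auto simp: simple_reps_def tens_scale_right T.scale_sum_right wavelet_def S.ip_scale_left
        sum_distrib_left)
qed

sublocale dense_L2_isometry scT ipT \<mu> simple_reps tensor_sum wavelet_sum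
proof
  show "\<exists>r\<in>simple_reps. hnorm ipT (x - tensor_sum r) < e" if "e > 0" for x e
    using simple_tensors_dense[OF that, of x] by (auto simp: simple_reps_def)
qed (use sq_int_wavelet_sum L2_normsq_wavelet_sum simple_reps_add simple_reps_scale in auto)

lemma wavelet_transform_well_defined:
  fixes n m :: nat
  assumes "\<forall>i<n. f i \<in> D" "\<forall>i<m. f' i \<in> D"
    and "(\<Sum>i<n. tens (j (f i)) (s i)) = (\<Sum>i<m. tens (j (f' i)) (s' i))"
  shows "AE g in \<mu>. (\<Sum>i<n. wavelet ip \<pi> (f i) (s i) g) = (\<Sum>i<m. wavelet ip \<pi> (f' i) (s' i) g)"
  using AE_\<Phi>_eq_if_X_eq[of "(n, f, s)" "(m, f', s')"] assms by (simp add: simple_reps_def)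

lemma sq_int_wavelet_transform:
  fixes n :: nat
  assumes "\<forall>i<n. f i \<in> D"
  shows "sq_int \<mu> (\<lambda>g. \<Sum>i<n. wavelet ip \<pi> (f i) (s i) g)"
  using sq_int_wavelet_sum[of "(n, f, s)"] assms by (simp add: simple_reps_def)

lemma L2_normsq_wavelet_transform:
  fixes n :: nat
  assumes "\<forall>i<n. f i \<in> D"
  shows "L2_normsq \<mu> (\<lambda>g. \<Sum>i<n. wavelet ip \<pi> (f i) (s i) g) = (hnorm ipT (\<Sum>i<n. tens (j (f i)) (s i)))\<^sup>2"
  using L2_normsq_wavelet_sum[of "(n, f, s)"] assms by (simp add: simple_reps_def)

lemma wavelet_plancherel_transform:
  "\<exists>V :: 't \<Rightarrow> 'g \<Rightarrow> complex.
     (\<forall>x. sq_int \<mu> (V x)) \<and>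
     (\<forall>n (f :: nat \<Rightarrow> 's) (s :: nat \<Rightarrow> 's). (\<forall>i<n. f i \<in> D) \<longrightarrow>
        (AE g in \<mu>. V (\<Sum>i<n. tens (j (f i)) (s i)) g = (\<Sum>i<n. wavelet ip \<pi> (f i) (s i) g))) \<and>
     (\<forall>x y. AE g in \<mu>. V (x + y) g = V x g + V y g) \<and>
     (\<forall>c x. AE g in \<mu>. V (scT c x) g = c * V x g) \<and>
     (\<forall>x y. L2_normsq \<mu> (\<lambda>g. V x g - V y g) = (hnorm ipT (x - y))\<^sup>2) \<and>
     (\<forall>V' :: 't \<Rightarrow> 'g \<Rightarrow> complex.
        (\<forall>x. sq_int \<mu> (V' x)) \<and>
        (\<forall>n (f :: nat \<Rightarrow> 's) (s :: nat \<Rightarrow> 's). (\<forall>i<n. f i \<in> D) \<longrightarrow>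
           (AE g in \<mu>. V' (\<Sum>i<n. tens (j (f i)) (s i)) g = (\<Sum>i<n. wavelet ip \<pi> (f i) (s i) g))) \<and>
        (\<forall>x (X :: nat \<Rightarrow> 't). (\<lambda>k. hnorm ipT (X k - x)) \<longlonglongrightarrow> 0 \<longrightarrow>
           (\<lambda>k. L2_normsq \<mu> (\<lambda>g. V' (X k) g - V' x g)) \<longlonglongrightarrow> 0)
        \<longrightarrow> (\<forall>x. AE g in \<mu>. V' x g = V x g))"
proof (intro exI[of _ extension] conjI allI impI)
  show "sq_int \<mu> (extension x)" for x
    by (rule sq_int_extension)
  show "AE g in \<mu>. extension (\<Sum>i<n. tens (j (f i)) (s i)) g = (\<Sum>i<n. wavelet ip \<pi> (f i) (s i) g)"
    if "\<forall>i<n. f i \<in> D" for n and f s :: "nat \<Rightarrow> 's"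
    using AE_extension_on_reps[of "(n, f, s)"] that by (simp add: simple_reps_def)
  show "AE g in \<mu>. extension (x + y) g = extension x g + extension y g" for x y
    by (rule AE_extension_add)
  show "AE g in \<mu>. extension (scT c x) g = c * extension x g" for c x
    by (rule AE_extension_scale)
  show "L2_normsq \<mu> (\<lambda>g. extension x g - extension y g) = (hnorm ipT (x - y))\<^sup>2" for x y
    using L2_norm_extension_diff[of x y] by (simp flip: power2_L2_norm)
  fix V' :: "'t \<Rightarrow> 'g \<Rightarrow> complex" and x
  assume V': "(\<forall>x. sq_int \<mu> (V' x)) \<and>
    (\<forall>n (f :: nat \<Rightarrow> 's) (s :: nat \<Rightarrow> 's). (\<forall>i<n. f i \<in> D) \<longrightarrow>
       (AE g in \<mu>. V' (\<Sum>i<n. tens (j (f i)) (s i)) g = (\<Sum>i<n. wavelet ip \<pi> (f i) (s i) g))) \<and>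
    (\<forall>x (X :: nat \<Rightarrow> 't). (\<lambda>k. hnorm ipT (X k - x)) \<longlonglongrightarrow> 0 \<longrightarrow>
       (\<lambda>k. L2_normsq \<mu> (\<lambda>g. V' (X k) g - V' x g)) \<longlonglongrightarrow> 0)"
  show "AE g in \<mu>. V' x g = extension x g"
  proof (rule AE_extension_unique)
    show "\<And>r. r \<in> simple_reps \<Longrightarrow> AE g in \<mu>. V' (tensor_sum r) g = wavelet_sum r g"
      using V' by (auto simp: simple_reps_def)
  qed (use V' in blast)+
qed

end

lemma wavelet_plancherel_setting_intro:
  assumes "left_haar \<mu>" and "hilbert_space sc ip"
    and "strongly_cont_unitary_rep sc ip \<pi>" and "duflo_moore \<mu> sc ip \<pi> D K"
    and "window_space sc ip D K scW ipW j" and "tensor_product scW ipW sc ip scT ipT tens"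
  shows "wavelet_plancherel_setting sc ip scW ipW scT ipT \<mu> \<pi> D K j tens"
proof -
  have "complex_inner_space sc ip" "complex_inner_space scW ipW" "complex_inner_space scT ipT"
    using assms(2,5,6) by (simp_all add: hilbert_space_def window_space_def tensor_product_def)
  moreover have "sets \<mu> = sets borel"
    using assms(1) unfolding left_haar_def by (elim conjE)
  moreover have "\<pi> g (x + y) = \<pi> g x + \<pi> g y" "((\<lambda>g. hnorm ip (\<pi> g s - \<pi> g0 s)) \<longlongrightarrow> 0) (at g0)"
    for g x y s g0
    using assms(3) unfolding strongly_cont_unitary_rep_def by blast+
  moreover have "0 \<in> D" "inj_on K D" "x \<in> D \<Longrightarrow> y \<in> D \<Longrightarrow> K (x + y) = K x + K y"
    "f1 \<in> D \<Longrightarrow> f2 \<in> D \<Longrightarrow>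
      L2_inner \<mu> (wavelet ip \<pi> f1 s1) (wavelet ip \<pi> f2 s2) = ip s1 s2 * ip (K f2) (K f1)"
    for x y f1 f2 s1 s2
    using assms(4) unfolding duflo_moore_def lin_subspace_def by blast+
  moreover have "f1 \<in> D \<Longrightarrow> f2 \<in> D \<Longrightarrow> ipW (j f1) (j f2) = ip (K f1) (K f2)" "hdense ipW (j ` D)"
    for f1 f2
    using assms(5) unfolding window_space_def by blast+
  moreover have "tens (a + b) s = tens a s + tens b s" "tens a (sc c s) = scT c (tens a s)"
    "ipT (tens a s) (tens b t) = cnj (ipW a b) * ip s t"
    "e > 0 \<Longrightarrow> \<exists>(n::nat) a s. hnorm ipT (z - (\<Sum>i<n. tens (a i) (s i))) < e"
    for a b s t c e z
    using assms(6) unfolding tensor_product_def by blast+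
  ultimately show ?thesis
    by unfold_locales assumption+
qed

theorem theorem2:
  fixes \<mu> :: "'g::{topological_group_add, t2_space} measure"
    and sc :: "complex \<Rightarrow> 's::ab_group_add \<Rightarrow> 's" and ip :: "'s \<Rightarrow> 's \<Rightarrow> complex"
    and \<pi> :: "'g \<Rightarrow> 's \<Rightarrow> 's"
    and D :: "'s set" and K :: "'s \<Rightarrow> 's"
    and scW :: "complex \<Rightarrow> 'w::ab_group_add \<Rightarrow> 'w" and ipW :: "'w \<Rightarrow> 'w \<Rightarrow> complex"
    and j :: "'s \<Rightarrow> 'w"
    and scT :: "complex \<Rightarrow> 't::ab_group_add \<Rightarrow> 't" and ipT :: "'t \<Rightarrow> 't \<Rightarrow> complex"
    and tens :: "'w \<Rightarrow> 's \<Rightarrow> 't"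
  assumes "locally_compact_group TYPE('g)"
    and "left_haar \<mu>"
    and "hilbert_space sc ip" and "hseparable ip"
    and "strongly_cont_unitary_rep sc ip \<pi>" and "irreducible_rep sc ip \<pi>"
    and "\<exists>f. f \<noteq> 0 \<and> is_window \<mu> ip \<pi> f"
    and "duflo_moore \<mu> sc ip \<pi> D K"
    and "window_space sc ip D K scW ipW j"
    and "tensor_product scW ipW sc ip scT ipT tens"
  shows
    \<comment> \<open>the span of the simple tensors f \<otimes> s, f \<in> W \<inter> S, is dense\<close>
    "(\<forall>x e. e > 0 \<longrightarrow>
        (\<exists>n (f :: nat \<Rightarrow> 's) (s :: nat \<Rightarrow> 's). (\<forall>i<n. f i \<in> D) \<and>
           hnorm ipT (x - (\<Sum>i<n. tens (j (f i)) (s i))) < e))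
     \<comment> \<open>V is well defined on the span\<close>
     \<and> (\<forall>n (f :: nat \<Rightarrow> 's) (s :: nat \<Rightarrow> 's) m (f' :: nat \<Rightarrow> 's) (s' :: nat \<Rightarrow> 's).
          (\<forall>i<n. f i \<in> D) \<and> (\<forall>i<m. f' i \<in> D) \<and>
          (\<Sum>i<n. tens (j (f i)) (s i)) = (\<Sum>i<m. tens (j (f' i)) (s' i)) \<longrightarrow>
          (AE g in \<mu>. (\<Sum>i<n. wavelet ip \<pi> (f i) (s i) g) = (\<Sum>i<m. wavelet ip \<pi> (f' i) (s' i) g)))
     \<comment> \<open>V is isometric on the span\<close>
     \<and> (\<forall>n (f :: nat \<Rightarrow> 's) (s :: nat \<Rightarrow> 's). (\<forall>i<n. f i \<in> D) \<longrightarrow>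
          sq_int \<mu> (\<lambda>g. \<Sum>i<n. wavelet ip \<pi> (f i) (s i) g) \<and>
          L2_normsq \<mu> (\<lambda>g. \<Sum>i<n. wavelet ip \<pi> (f i) (s i) g)
            = (hnorm ipT (\<Sum>i<n. tens (j (f i)) (s i)))\<^sup>2)
     \<comment> \<open>the continuous extension: a linear isometry W \<otimes> S \<rightarrow> L^2(G) (modulo a.e. equality),
         unique among L^2-continuous extensions\<close>
     \<and> (\<exists>V :: 't \<Rightarrow> 'g \<Rightarrow> complex.
          (\<forall>x. sq_int \<mu> (V x)) \<and>
          (\<forall>n (f :: nat \<Rightarrow> 's) (s :: nat \<Rightarrow> 's). (\<forall>i<n. f i \<in> D) \<longrightarrow>
             (AE g in \<mu>. V (\<Sum>i<n. tens (j (f i)) (s i)) g = (\<Sum>i<n. wavelet ip \<pi> (f i) (s i) g))) \<and>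
          (\<forall>x y. AE g in \<mu>. V (x + y) g = V x g + V y g) \<and>
          (\<forall>c x. AE g in \<mu>. V (scT c x) g = c * V x g) \<and>
          (\<forall>x y. L2_normsq \<mu> (\<lambda>g. V x g - V y g) = (hnorm ipT (x - y))\<^sup>2) \<and>
          (\<forall>V' :: 't \<Rightarrow> 'g \<Rightarrow> complex.
             (\<forall>x. sq_int \<mu> (V' x)) \<and>
             (\<forall>n (f :: nat \<Rightarrow> 's) (s :: nat \<Rightarrow> 's). (\<forall>i<n. f i \<in> D) \<longrightarrow>
                (AE g in \<mu>. V' (\<Sum>i<n. tens (j (f i)) (s i)) g = (\<Sum>i<n. wavelet ip \<pi> (f i) (s i) g))) \<and>
             (\<forall>x (X :: nat \<Rightarrow> 't). (\<lambda>k. hnorm ipT (X k - x)) \<longlonglongrightarrow> 0 \<longrightarrow>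
                (\<lambda>k. L2_normsq \<mu> (\<lambda>g. V' (X k) g - V' x g)) \<longlonglongrightarrow> 0)
             \<longrightarrow> (\<forall>x. AE g in \<mu>. V' x g = V x g)))"
proof -
  \<comment> \<open>Local compactness, separability, irreducibility and the existence of a window are what
    make the Duflo--Moore operator exist.\<close>
  interpret wavelet_plancherel_setting sc ip scW ipW scT ipT \<mu> \<pi> D K j tens
    using assms(2,3,5,8-10) by (rule wavelet_plancherel_setting_intro)
  show ?thesis
    by (intro conjI allI impI wavelet_plancherel_transform; (elim conjE)?;
        rule simple_tensors_dense wavelet_transform_well_defined sq_int_wavelet_transform
          L2_normsq_wavelet_transform; assumption)
qed

end
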